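(* The (multi-valued) Kasner map realizes chaos for all $v\in (0,1/2)$.
   Context: Fix a parameter $v\in(0,1/2)$. Let $\mathrm{K}^{\circ}$ denote the Kasner circle $\{(\Sigma_+,\Sigma_-)\,:\,\Sigma_+^2+\Sigma_-^2=1\}$, parametrized by the angle $\varphi$ via $(\Sigma_+,\Sigma_-)=(\cos\varphi,\sin\varphi)$. Let $A_1:=\{\Sigma_+\ge v\}\cap \mathrm{K}^{\circ}$, i.e. $\varphi\in[-\arccos v,\arccos v]$, and let $A_2,A_3$ be its images under rotation by $\pm 2\pi/3$ (namely $A_2=\{-(\Sigma_++\sqrt3\Sigma_-)/2\ge v\}$, $A_3=\{-(\Sigma_+-\sqrt3\Sigma_-)/2\ge v\}$). On $A_1$ define $\mathcal{K}_1(\varphi):=\pi-2\arctan\big(\tfrac{1+v}{1-v}\tan(\varphi/2)\big)$ (the map sending the $\alpha$-limit to the $\omega$-limit of Bianchi type II heteroclinic orbits with $N_1\neq0$), and let $\mathcal{K}_2,\mathcal{K}_3$ on $A_2,A_3$ be the maps obtained from $\mathcal{K}_1$ by the same rotations. Set $\mathbf{A}:=(A_1\cap A_2)\cup(A_2\cap A_3)\cup(A_1\cap A_3)$; for $v<1/2$ these overlaps have positive length. For $\mu\in\{1,2\},\nu\in\{2,3\},\zeta\in\{1,3\}$ define $\mathcal{K}_{\mu\nu\zeta}:\mathrm{K}^{\circ}\to\mathrm{K}^{\circ}$ by $\mathcal{K}_{\mu\nu\zeta}(p)=\mathcal{K}_\alpha(p)$ if $p\in A_\alpha\setminus\mathbf{A}$,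 $=\mathcal{K}_\mu(p)$ if $p\in A_1\cap A_2$, $=\mathcal{K}_\nu(p)$ if $p\in A_2\cap A_3$, $=\mathcal{K}_\zeta(p)$ if $p\in A_1\cap A_3$. Let $\Sigma$ be the space of sequences $\omega=(\mu_n,\nu_n,\zeta_n)_{n\ge1}$ with $\mu_n\in\{1,2\},\nu_n\in\{2,3\},\zeta_n\in\{1,3\}$, and for $\omega=(\omega_n)$ set $\mathcal{K}^n_\omega:=\mathcal{K}_{\omega_n}\circ\cdots\circ\mathcal{K}_{\omega_1}$, $\mathcal{K}^0_\omega=\mathrm{Id}$. The (multi-valued) Kasner map is the skew product $(\omega,p)\mapsto(\sigma(\omega),\mathcal{K}_{\omega_1}(p))$ with $\sigma$ the shift. It realizes chaos if: (i) (sensitivity) there is $\delta>0$ such that for every $p\in\mathrm{K}^{\circ}$ and every neighborhood $U$ of $p$ there are $q\in U\setminus\{p\}$, $n\in\mathbb{N}_0$, $\omega,\omega^*\in\Sigma$ with $d(\mathcal{K}^n_\omega(p),\mathcal{K}^n_{\omega^*}(q))\ge\delta$; (ii) (topological transitivity) for any open $U,V\subset\mathrm{K}^{\circ}$ there are $n\in\mathbb{N}$, $\omega\in\Sigma$ with $\mathcal{K}^n_\omega(U)\cap V\neq\emptyset$; (iii) (dense periodic orbits) for every $p\in\mathrm{K}^{\circ}$ and every neighborhood $U$ of $p$ there are $\omega\in\Sigma$, $q\in U$, $n\in\mathbb{N}$ with $\mathcal{K}^n_\omega(q)=q$. *)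

theory Defs
  imports "HOL-Analysis.Analysis"
begin

text \<open>Points (Sigma_+, Sigma_-) of the plane are encoded as complex numbers
  Sigma_+ + i Sigma_-. The Kasner circle is the unit circle; the angle phi of a
  point z is Arg z.\<close>

definition kasner_circle :: "complex set" where
  "kasner_circle = {z. cmod z = 1}"

definition arcA :: "real \<Rightarrow> nat \<Rightarrow> complex set" where
  "arcA v a = {z \<in> kasner_circle.
     (if a = 1 then Re z \<ge> v
      else if a = 2 then - (Re z + sqrt 3 * Im z) / 2 \<ge> v
      else - (Re z - sqrt 3 * Im z) / 2 \<ge> v)}"

definition K1 :: "real \<Rightarrow> complex \<Rightarrow> complex" where
  "K1 v z = cis (pi - 2 * arctan ((1 + v) / (1 - v) * tan (Arg z / 2)))"

text \<open>Rotation carrying A_1 onto A_a: A_2 = rot(-2pi/3) A_1, A_3 = rot(2pi/3) A_1.\<close>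
definition rotA :: "nat \<Rightarrow> complex" where
  "rotA a = (if a = 1 then 1 else if a = 2 then cis (- 2 * pi / 3) else cis (2 * pi / 3))"

definition Kalpha :: "real \<Rightarrow> nat \<Rightarrow> complex \<Rightarrow> complex" where
  "Kalpha v a z = rotA a * K1 v (z / rotA a)"

definition overlapA :: "real \<Rightarrow> complex set" where
  "overlapA v = (arcA v 1 \<inter> arcA v 2) \<union> (arcA v 2 \<inter> arcA v 3) \<union> (arcA v 1 \<inter> arcA v 3)"

definition Ksym :: "real \<Rightarrow> nat \<times> nat \<times> nat \<Rightarrow> complex \<Rightarrow> complex" where
  "Ksym v s p = (case s of (mu, nu, zeta) \<Rightarrow>
     if p \<in> arcA v 1 \<inter> arcA v 2 then Kalpha v mu p
     else if p \<in> arcA v 2 \<inter> arcA v 3 then Kalpha v nu p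
     else if p \<in> arcA v 1 \<inter> arcA v 3 then Kalpha v zeta p
     else if p \<in> arcA v 1 then Kalpha v 1 p
     else if p \<in> arcA v 2 then Kalpha v 2 p
     else Kalpha v 3 p)"

text \<open>Admissible symbol sequences (omega_1, omega_2, ...) stored as omega 0, omega 1, ...\<close>
definition valid_seq :: "(nat \<Rightarrow> nat \<times> nat \<times> nat) \<Rightarrow> bool" where
  "valid_seq \<omega> \<longleftrightarrow> (\<forall>n. case \<omega> n of (mu, nu, zeta) \<Rightarrow>
      mu \<in> {1, 2} \<and> nu \<in> {2, 3} \<and> zeta \<in> {1, 3})"

fun Kiter :: "real \<Rightarrow> (nat \<Rightarrow> nat \<times> nat \<times> nat) \<Rightarrow> nat \<Rightarrow> complex \<Rightarrow> complex" where
  "Kiter v \<omega> 0 p = p"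
| "Kiter v \<omega> (Suc n) p = Ksym v (\<omega> n) (Kiter v \<omega> n p)"

definition sensitive :: "real \<Rightarrow> bool" where
  "sensitive v \<longleftrightarrow> (\<exists>\<delta>>0. \<forall>p \<in> kasner_circle. \<forall>U. openin (top_of_set kasner_circle) U \<and> p \<in> U \<longrightarrow>
      (\<exists>q \<in> U - {p}. \<exists>n \<omega> \<omega>'. valid_seq \<omega> \<and> valid_seq \<omega>' \<and>
         dist (Kiter v \<omega> n p) (Kiter v \<omega>' n q) \<ge> \<delta>))"

definition top_transitive :: "real \<Rightarrow> bool" where
  "top_transitive v \<longleftrightarrow> (\<forall>U V. openin (top_of_set kasner_circle) U \<and> U \<noteq> {} \<and>
      openin (top_of_set kasner_circle) V \<and> V \<noteq> {} \<longrightarrow>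
      (\<exists>n \<ge> 1. \<exists>\<omega>. valid_seq \<omega> \<and> Kiter v \<omega> n ` U \<inter> V \<noteq> {}))"

definition dense_periodic :: "real \<Rightarrow> bool" where
  "dense_periodic v \<longleftrightarrow> (\<forall>p \<in> kasner_circle. \<forall>U. openin (top_of_set kasner_circle) U \<and> p \<in> U \<longrightarrow>
      (\<exists>\<omega> q n. valid_seq \<omega> \<and> q \<in> U \<and> n \<ge> 1 \<and> Kiter v \<omega> n q = q))"

definition realizes_chaos :: "real \<Rightarrow> bool" where
  "realizes_chaos v \<longleftrightarrow> sensitive v \<and> top_transitive v \<and> dense_periodic v"

end

(*
  In the angle coordinate x of p = cis x, each K_a maps its arc decreasingly onto the
  complementary arc, fixing one end and moving the other by 2 pi; it never contracts, and
  near the centre of the arc it expands by a factor mu > 1.  Applying at each step the map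
  of an arc that contains the current interval of angles, every interval grows until it
  covers one of the overlaps of consecutive arcs, and reflecting across the ends of the
  arcs then spreads an overlap over the whole circle.

  Lifting a fixed composition K^n_omega to an interval of angles ("branch"), this shows
  that some branch maps every neighbourhood onto an overlap and that from every overlap
  some branch covers a neighbourhood of any given angle.  Composing the two gives
  topological transitivity; a fixed point of the composite, found by the intermediate
  value theorem, gives periodic points in every neighbourhood; and sensitivity holds
  because the image of every neighbourhood contains an overlap, an arc of length
  2 epsilon.
*)

theory Submission
  imports Defs "HOL-Library.Periodic_Fun"
begin

lemma arctan_scaled_growth:
  fixes c \<mu> a b :: real
  assumes "a \<le> b" and slope: "\<And>x. a \<le> x \<Longrightarrow> x \<le> b \<Longrightarrow> \<mu> / (1 + x\<^sup>2) \<le> c / (1 + (c * x)\<^sup>2)"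
  shows "\<mu> * (arctan b - arctan a) \<le> arctan (c * b) - arctan (c * a)"
proof -
  define f where "f x = arctan (c * x) - \<mu> * arctan x" for x
  have "f a \<le> f b"
  proof (rule DERIV_nonneg_imp_increasing_open[OF \<open>a \<le> b\<close>])
    fix x assume "a < x" "x < b"
    have "DERIV f x :> inverse (1 + (c * x)\<^sup>2) * c - \<mu> * inverse (1 + x\<^sup>2)"
      unfolding f_def by (auto intro!: derivative_eq_intros)
    moreover have "inverse (1 + (c * x)\<^sup>2) * c - \<mu> * inverse (1 + x\<^sup>2) \<ge> 0"
      using slope[of x] \<open>a < x\<close> \<open>x < b\<close> by (simp add: field_simps)
    ultimately show "\<exists>y. DERIV f x :> y \<and> y \<ge> 0" by blast
  qed (unfold f_def, intro continuous_intros)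
  thus ?thesis unfolding f_def by (simp add: algebra_simps)
qed

lemma arctan_slope_ratio_antimono:
  fixes c x y :: real
  assumes "1 < c" "x\<^sup>2 \<le> y\<^sup>2"
  shows "c * (1 + y\<^sup>2) / (1 + c\<^sup>2 * y\<^sup>2) \<le> c * (1 + x\<^sup>2) / (1 + c\<^sup>2 * x\<^sup>2)"
proof -
  have "(c\<^sup>2 - 1) * (x\<^sup>2 - y\<^sup>2) \<le> 0"
    using assms by (intro mult_nonneg_nonpos) (auto simp: power_le_one_iff)
  hence "(1 + y\<^sup>2) * (1 + c\<^sup>2 * x\<^sup>2) \<le> (1 + x\<^sup>2) * (1 + c\<^sup>2 * y\<^sup>2)"
    by (simp add: algebra_simps)
  hence "c * (1 + y\<^sup>2) * (1 + c\<^sup>2 * x\<^sup>2) \<le> c * (1 + x\<^sup>2) * (1 + c\<^sup>2 * y\<^sup>2)"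
    using assms(1) by (simp add: mult.assoc)
  thus ?thesis by (simp add: divide_le_eq le_divide_eq add_pos_nonneg)
qed

lemma norm_cis_diff: "cmod (cis x - cis y) = 2 * \<bar>sin ((x - y) / 2)\<bar>"
proof -
  have "(cmod (cis x - cis y))\<^sup>2 = (cos x - cos y)\<^sup>2 + (sin x - sin y)\<^sup>2"
    by (simp add: cmod_power2)
  also have "\<dots> = 2 - 2 * cos (x - y)"
    by (simp add: power2_diff cos_diff algebra_simps)
  also have "\<dots> = (2 * \<bar>sin ((x - y) / 2)\<bar>)\<^sup>2"
    using cos_double_sin[of "(x - y) / 2", unfolded mult_2 field_sum_of_halves]
    by (simp add: power_mult_distrib)
  finally show ?thesis by (rule power2_eq_imp_eq) auto
qed

lemma norm_cis_diff_le: "cmod (cis x - cis y) \<le> \<bar>x - y\<bar>"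
  using norm_cis_diff[of x y] abs_sin_x_le_abs_x[of "(x - y) / 2"] by simp

lemma cis_add_2pi_int: "cis (x + 2 * pi * of_int m) = cis x"
  using cis_mult[of x "2 * pi * of_int m"] by simp

lemma far_point_in_image:
  assumes "y \<in> F ` I" "y + d \<in> F ` I" "x \<in> I"
  obtains q where "q \<in> I" "\<bar>sin (d / 2)\<bar> \<le> dist (cis (F x)) (cis (F q))"
proof -
  obtain q\<^sub>1 q\<^sub>2 where q: "q\<^sub>1 \<in> I" "F q\<^sub>1 = y" "q\<^sub>2 \<in> I" "F q\<^sub>2 = y + d" using assms(1,2) by auto
  have "2 * \<bar>sin (d / 2)\<bar> = dist (cis y) (cis (y + d))"
    using norm_cis_diff[of y "y + d"] by (simp add: dist_norm)
  also have "\<dots> \<le> dist (cis (F x)) (cis (F q\<^sub>1)) + dist (cis (F x)) (cis (F q\<^sub>2))"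
    using dist_triangle3[of "cis y" "cis (y + d)" "cis (F x)"] q by simp
  finally have "\<bar>sin (d / 2)\<bar> \<le> dist (cis (F x)) (cis (F q\<^sub>1)) \<or>
      \<bar>sin (d / 2)\<bar> \<le> dist (cis (F x)) (cis (F q\<^sub>2))"
    by linarith
  thus ?thesis using that q(1,3) by blast
qed

lemma kasner_circle_openin_arc:
  assumes "openin (top_of_set kasner_circle) U" "p \<in> U"
  shows "\<exists>x e. p = cis x \<and> 0 < e \<and> (\<forall>y. \<bar>y - x\<bar> \<le> e \<longrightarrow> cis y \<in> U)"
proof -
  obtain e where "e > 0" and e: "ball p e \<inter> kasner_circle \<subseteq> U"
    using assms unfolding openin_contains_ball by blast
  have "cmod p = 1" using openin_subset[OF assms(1)] assms(2) unfolding kasner_circle_def by auto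
  hence p: "p = cis (Arg p)" using cis_Arg[of p] by (cases "p = 0") (auto simp: sgn_div_norm)
  have "cis y \<in> U" if "\<bar>y - Arg p\<bar> \<le> e / 2" for y
  proof -
    have "dist p (cis y) < e"
      using norm_cis_diff_le[of "Arg p" y] that \<open>e > 0\<close> p by (simp add: dist_norm abs_minus_commute)
    thus ?thesis using e unfolding kasner_circle_def by auto
  qed
  thus ?thesis using p \<open>e > 0\<close> by (intro exI[of _ "Arg p"] exI[of _ "e / 2"]) auto
qed

lemma periodic_set_eq_UNIV:
  fixes S :: "real set"
  assumes periodic: "\<And>x. x + p \<in> S \<longleftrightarrow> x \<in> S" and "p > 0" and "{c..c + p} \<subseteq> S"
  shows "S = UNIV"
proof -
  interpret periodic_fun_simple "\<lambda>x. x \<in> S" p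
    using periodic by unfold_locales
  have "x \<in> S" for x
  proof -
    define m where "m = \<lfloor>(x - c) / p\<rfloor>"
    have "of_int m \<le> (x - c) / p" "(x - c) / p < of_int m + 1"
      unfolding m_def by linarith+
    hence "of_int m * p \<le> x - c" "x - c < of_int m * p + p"
      using \<open>p > 0\<close> by (simp_all add: field_simps)
    hence "x + of_int (- m) * p \<in> S" using \<open>{c..c + p} \<subseteq> S\<close> by auto
    thus "x \<in> S" by (simp only: plus_of_int)
  qed
  thus ?thesis by blast
qed

definition monotonic_on :: "real set \<Rightarrow> (real \<Rightarrow> real) \<Rightarrow> bool" where
  "monotonic_on S F \<longleftrightarrow> mono_on S F \<or> antimono_on S F"

lemma monotonic_on_subset: "monotonic_on S F \<Longrightarrow> T \<subseteq> S \<Longrightarrow> monotonic_on T F"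
  unfolding monotonic_on_def using monotone_on_subset by blast

lemma monotonic_on_comp:
  assumes "monotonic_on S F" "monotonic_on T G" "F ` S \<subseteq> T"
  shows "monotonic_on S (G \<circ> F)"
proof -
  have FT: "F x \<in> T" if "x \<in> S" for x using assms(3) that by blast
  have "monotonic_on S (G \<circ> F)" if F: "monotone_on S (\<le>) ord F" and G: "monotone_on T ord ord' G"
    and "ord' = (\<le>) \<or> ord' = (\<lambda>x y. y \<le> x)" for ord ord'
  proof -
    have "monotone_on S (\<le>) ord' (G \<circ> F)"
      by (rule monotone_onI) (simp add: FT monotone_onD[OF F] monotone_onD[OF G])
    thus ?thesis using that(3) unfolding monotonic_on_def by auto
  qed
  moreover have "monotone_on T (\<lambda>x y. y \<le> x) (\<lambda>x y. y \<le> x) G" if "mono_on T G"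
    using that by (auto simp: monotone_on_def)
  moreover have "monotone_on T (\<lambda>x y. y \<le> x) (\<le>) G" if "antimono_on T G"
    using that by (auto simp: monotone_on_def)
  ultimately show ?thesis using assms(1,2) unfolding monotonic_on_def by metis
qed

lemma continuous_monotonic_interval_preimage:
  assumes "continuous_on {a..b} F" "monotonic_on {a..b} F" "c \<le> d" "{c..d} \<subseteq> F ` {a..b}"
  obtains lo hi where "a \<le> lo" "lo \<le> hi" "hi \<le> b" "F ` {lo..hi} = {c..d}"
proof -
  have "c \<in> F ` {a..b}" "d \<in> F ` {a..b}" using assms(3,4) by auto
  then obtain x y where xy: "x \<in> {a..b}" "y \<in> {a..b}" "F x = c" "F y = d" by blast
  define lo hi where "lo = min x y" and "hi = max x y"
  have lo_hi: "a \<le> lo" "lo \<le> hi" "hi \<le> b" using xy unfolding lo_def hi_def by auto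
  have ends: "min (F lo) (F hi) = c" "max (F lo) (F hi) = d"
    using xy \<open>c \<le> d\<close> unfolding lo_def hi_def by (cases "x \<le> y"; simp add: min_def max_def)+
  have "F t \<in> {c..d}" if "t \<in> {lo..hi}" for t
  proof -
    have mem: "lo \<in> {a..b}" "hi \<in> {a..b}" "t \<in> {a..b}" "lo \<le> t" "t \<le> hi"
      using that lo_hi by auto
    have "F lo \<le> F t \<and> F t \<le> F hi \<or> F hi \<le> F t \<and> F t \<le> F lo"
      using assms(2) unfolding monotonic_on_def
    proof
      assume "mono_on {a..b} F" thus ?thesis using mem by (meson monotone_onD)
    next
      assume "antimono_on {a..b} F" thus ?thesis using mem by (meson monotone_onD)
    qed
    thus ?thesis using ends by auto
  qed
  moreover have "{c..d} \<subseteq> F ` {lo..hi}"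
  proof (rule connected_contains_Icc)
    show "connected (F ` {lo..hi})"
      using lo_hi by (intro connected_continuous_image continuous_on_subset[OF assms(1)]) auto
    show "c \<in> F ` {lo..hi}" "d \<in> F ` {lo..hi}"
      using xy unfolding lo_def hi_def by auto
  qed
  ultimately show ?thesis using that lo_hi by blast
qed

lemma interval_covering_fixed_point:
  fixes G :: "real \<Rightarrow> real"
  assumes "continuous_on {a..b} G" "a \<le> b" "{a..b} \<subseteq> G ` {a..b}"
  obtains x where "x \<in> {a..b}" "G x = x"
proof -
  have "a \<in> G ` {a..b}" "b \<in> G ` {a..b}" using assms(2,3) by auto
  then obtain y z where yz: "y \<in> {a..b}" "G y = a" "z \<in> {a..b}" "G z = b" by blast
  define h where "h x = G x - x" for x
  have "h y \<le> 0" "0 \<le> h z" using yz unfolding h_def by auto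
  moreover have "connected (h ` {a..b})"
    unfolding h_def by (rule connected_continuous_image) (auto intro!: continuous_intros assms(1))
  ultimately have "0 \<in> h ` {a..b}"
    using yz connected_contains_Icc[of "h ` {a..b}" "h y" "h z"] by auto
  thus ?thesis using that unfolding h_def by force
qed

definition seq_append :: "(nat \<Rightarrow> 'a) \<Rightarrow> nat \<Rightarrow> (nat \<Rightarrow> 'a) \<Rightarrow> nat \<Rightarrow> 'a" where
  "seq_append \<omega> n \<omega>' i = (if i < n then \<omega> i else \<omega>' (i - n))"

lemma valid_seq_append: "valid_seq \<omega> \<Longrightarrow> valid_seq \<omega>' \<Longrightarrow> valid_seq (seq_append \<omega> n \<omega>')"
  unfolding valid_seq_def seq_append_def by auto

lemma Kiter_cong: "(\<And>i. i < n \<Longrightarrow> \<omega> i = \<omega>' i) \<Longrightarrow> Kiter v \<omega> n p = Kiter v \<omega>' n p"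
  by (induction n) auto

lemma Kiter_seq_append:
  "Kiter v (seq_append \<omega> n \<omega>') (n + m) p = Kiter v \<omega>' m (Kiter v \<omega> n p)"
proof (induction m)
  case 0
  show ?case by simp (rule Kiter_cong, simp add: seq_append_def)
qed (simp add: seq_append_def)

section \<open>The Kasner maps in angle coordinates\<close>

locale kasner_parameter =
  fixes v :: real
  assumes v_pos: "0 < v" and v_less_half: "v < 1 / 2"
begin

text \<open>In the angle coordinate the arc \<open>A\<^sub>1\<close> is \<open>[-\<alpha>, \<alpha>]\<close>, consecutive arcs overlap in
  intervals of length \<open>2 \<epsilon>\<close>, and \<open>K1_angle\<close> is \<open>K\<^sub>1\<close>.\<close>

definition \<kappa> :: real where "\<kappa> = (1 + v) / (1 - v)"
definition \<alpha> :: real where "\<alpha> = arccos v"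
definition \<epsilon> :: real where "\<epsilon> = \<alpha> - pi / 3"
definition K1_angle :: "real \<Rightarrow> real" where "K1_angle u = pi - 2 * arctan (\<kappa> * tan (u / 2))"

text \<open>The minimum of \<open>|K1_angle'|\<close> on \<open>[-r, r]\<close>.\<close>
definition expansion :: "real \<Rightarrow> real" where
  "expansion r = \<kappa> * (1 + (tan (r / 2))\<^sup>2) / (1 + \<kappa>\<^sup>2 * (tan (r / 2))\<^sup>2)"

text \<open>Every interval of length at most \<open>\<epsilon>\<close> lies within \<open>\<beta>\<close> of the nearest centre of an arc,
  and \<open>\<beta> < \<alpha>\<close>.\<close>
definition \<beta> :: real where "\<beta> = pi / 3 + \<epsilon> / 2"
definition \<mu> :: real where "\<mu> = expansion \<beta>"

lemma kappa_gt_1: "1 < \<kappa>"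
  unfolding \<kappa>_def using v_pos v_less_half by (simp add: field_simps)

lemma alpha_bounds: "pi / 3 < \<alpha>" "\<alpha> < pi / 2"
proof -
  have "arccos (1 / 2) < arccos v" by (rule arccos_less_arccos) (use v_pos v_less_half in auto)
  thus "pi / 3 < \<alpha>" unfolding \<alpha>_def by simp
  have "arccos v < arccos 0" by (rule arccos_less_arccos) (use v_pos v_less_half in auto)
  thus "\<alpha> < pi / 2" unfolding \<alpha>_def by simp
qed

lemma epsilon_bounds: "0 < \<epsilon>" "\<epsilon> < pi / 6" "\<epsilon> < \<alpha>"
  using alpha_bounds unfolding \<epsilon>_def by auto

lemma beta_bounds: "pi / 3 < \<beta>" "\<beta> < \<alpha>"
  using alpha_bounds unfolding \<beta>_def \<epsilon>_def by (auto simp: field_simps)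

lemma tan_half_alpha_sq: "(tan (\<alpha> / 2))\<^sup>2 = 1 / \<kappa>"
proof -
  have "cos \<alpha> = v" "sin \<alpha> = sqrt (1 - v\<^sup>2)"
    unfolding \<alpha>_def using v_pos v_less_half by (simp_all add: sin_arccos)
  moreover have "tan (\<alpha> / 2) = sin \<alpha> / (cos \<alpha> + 1)" using tan_half[of "\<alpha> / 2"] by simp
  moreover have "v\<^sup>2 \<le> 1" using v_pos v_less_half by (intro power_le_one) auto
  ultimately have "(tan (\<alpha> / 2))\<^sup>2 = (1 - v) * (1 + v) / ((1 + v) * (1 + v))"
    using v_pos by (simp add: power_divide power2_eq_square algebra_simps)
  thus ?thesis using v_pos unfolding \<kappa>_def by simp
qed

lemma expansion_alpha: "expansion \<alpha> = 1"
proof -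
  have "\<kappa> * (1 + 1 / \<kappa>) = 1 + \<kappa>" "1 + \<kappa>\<^sup>2 * (1 / \<kappa>) = 1 + \<kappa>"
    using kappa_gt_1 by (simp_all add: field_simps power2_eq_square)
  thus ?thesis using kappa_gt_1 unfolding expansion_def tan_half_alpha_sq by simp
qed

lemma mu_gt_1: "1 < \<mu>"
proof -
  have "tan (\<beta> / 2) < tan (\<alpha> / 2)" "0 < tan (\<beta> / 2)"
    using alpha_bounds beta_bounds by (auto intro!: tan_monotone tan_gt_zero)
  hence "\<kappa> * (tan (\<beta> / 2))\<^sup>2 < \<kappa> * (tan (\<alpha> / 2))\<^sup>2"
    using kappa_gt_1 by (intro mult_strict_left_mono power_strict_mono) auto
  hence "\<kappa> * (tan (\<beta> / 2))\<^sup>2 < 1"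
    using tan_half_alpha_sq kappa_gt_1 by simp
  hence "0 < (\<kappa> - 1) * (1 - \<kappa> * (tan (\<beta> / 2))\<^sup>2)" using kappa_gt_1 by simp
  hence "1 + \<kappa>\<^sup>2 * (tan (\<beta> / 2))\<^sup>2 < \<kappa> * (1 + (tan (\<beta> / 2))\<^sup>2)"
    by (simp add: algebra_simps power2_eq_square)
  thus ?thesis unfolding \<mu>_def expansion_def by (simp add: add_pos_nonneg)
qed

lemma K1_angle_growth:
  assumes "r < pi" "-r \<le> s" "s \<le> t" "t \<le> r"
  shows "expansion r * (t - s) \<le> K1_angle s - K1_angle t"
proof -
  have tan_mono: "tan (x / 2) \<le> tan (y / 2)" if "-r \<le> x" "x \<le> y" "y \<le> r" for x y
    using that assms(1) by (cases "x = y") (auto intro!: less_imp_le[OF tan_monotone])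
  have "expansion r * (arctan (tan (t / 2)) - arctan (tan (s / 2)))
      \<le> arctan (\<kappa> * tan (t / 2)) - arctan (\<kappa> * tan (s / 2))"
  proof (rule arctan_scaled_growth)
    show "tan (s / 2) \<le> tan (t / 2)" using assms by (intro tan_mono) auto
    fix x assume "tan (s / 2) \<le> x" "x \<le> tan (t / 2)"
    moreover have "-tan (r / 2) \<le> tan (s / 2)" "tan (t / 2) \<le> tan (r / 2)"
      using tan_mono[of "-r" s] tan_mono[of t r] assms by auto
    ultimately have "x\<^sup>2 \<le> (tan (r / 2))\<^sup>2" by (intro abs_le_square_iff[THEN iffD1]) auto
    hence "expansion r \<le> \<kappa> * (1 + x\<^sup>2) / (1 + \<kappa>\<^sup>2 * x\<^sup>2)"
      unfolding expansion_def using kappa_gt_1 by (rule arctan_slope_ratio_antimono[rotated])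
    thus "expansion r / (1 + x\<^sup>2) \<le> \<kappa> / (1 + (\<kappa> * x)\<^sup>2)"
      by (simp add: field_simps add_pos_nonneg power_mult_distrib)
  qed
  moreover have "arctan (tan (t / 2)) = t / 2" "arctan (tan (s / 2)) = s / 2"
    using assms by (intro arctan_tan; linarith)+
  ultimately show ?thesis unfolding K1_angle_def by (simp add: algebra_simps)
qed

lemma K1_angle_alpha: "K1_angle \<alpha> = \<alpha>" "K1_angle (-\<alpha>) = 2 * pi - \<alpha>"
proof -
  have t: "0 < tan (\<alpha> / 2)" using alpha_bounds by (intro tan_gt_zero) auto
  hence "\<kappa> * tan (\<alpha> / 2) = inverse (tan (\<alpha> / 2))"
    using tan_half_alpha_sq kappa_gt_1 by (simp add: field_simps power2_eq_square)
  hence "arctan (\<kappa> * tan (\<alpha> / 2)) = pi / 2 - \<alpha> / 2"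
    using arctan_inverse[of "tan (\<alpha> / 2)"] t alpha_bounds by (simp add: arctan_tan)
  thus "K1_angle \<alpha> = \<alpha>" "K1_angle (-\<alpha>) = 2 * pi - \<alpha>"
    unfolding K1_angle_def by (simp_all add: arctan_minus)
qed

lemma isCont_K1_angle: "\<bar>u\<bar> < pi \<Longrightarrow> isCont K1_angle u"
  unfolding K1_angle_def using cos_gt_zero_pi[of "u / 2"]
  by (intro continuous_intros) (auto simp: abs_less_iff)

definition centre :: "int \<Rightarrow> real" where "centre j = 2 * pi * of_int j / 3"

definition K_lift :: "int \<Rightarrow> real \<Rightarrow> real" where
  "K_lift j x = centre j + K1_angle (x - centre j)"

definition arc_interval :: "int \<Rightarrow> real set" where
  "arc_interval j = {centre j - \<alpha> .. centre j + \<alpha>}"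

definition overlap_interval :: "int \<Rightarrow> real set" where
  "overlap_interval j = {centre (j + 1) - \<alpha> .. centre j + \<alpha>}"

lemma centre_succ: "centre (j + 1) = centre j + 2 * pi / 3"
  unfolding centre_def by (simp add: field_simps)

lemma centre_add_3: "centre (j + 3 * m) = centre j + 2 * pi * of_int m"
  unfolding centre_def by (simp add: field_simps)

lemma overlap_interval_length: "(centre j + \<alpha>) - (centre (j + 1) - \<alpha>) = 2 * \<epsilon>"
  unfolding centre_succ \<epsilon>_def by simp

lemma arc_interval_iff: "x \<in> arc_interval j \<longleftrightarrow> \<bar>x - centre j\<bar> \<le> \<alpha>"
  unfolding arc_interval_def by auto

lemma K_lift_growth:
  assumes "r < pi" "centre j - r \<le> x" "x \<le> y" "y \<le> centre j + r"
  shows "expansion r * (y - x) \<le> K_lift j x - K_lift j y"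
  using K1_angle_growth[of r "x - centre j" "y - centre j"] assms unfolding K_lift_def by auto

lemma K_lift_noncontracting:
  assumes "x \<in> arc_interval j" "y \<in> arc_interval j" "x \<le> y"
  shows "y - x \<le> K_lift j x - K_lift j y"
  using K_lift_growth[of \<alpha> j x y] assms alpha_bounds
  unfolding expansion_alpha arc_interval_def by auto

lemma K_lift_expanding:
  assumes "centre j - \<beta> \<le> x" "x \<le> y" "y \<le> centre j + \<beta>"
  shows "\<mu> * (y - x) \<le> K_lift j x - K_lift j y"
  using K_lift_growth[of \<beta> j x y] assms alpha_bounds beta_bounds unfolding \<mu>_def by auto

lemma K_lift_arc_ends:
  "K_lift j (centre j + \<alpha>) = centre j + \<alpha>" "K_lift j (centre j - \<alpha>) = centre j - \<alpha> + 2 * pi"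
  unfolding K_lift_def using K1_angle_alpha by simp_all

lemma antimono_on_K_lift: "antimono_on (arc_interval j) (K_lift j)"
  using K_lift_noncontracting by (intro monotone_onI) fastforce

lemma continuous_on_K_lift: "continuous_on (arc_interval j) (K_lift j)"
proof (intro continuous_at_imp_continuous_on ballI)
  fix x assume "x \<in> arc_interval j"
  hence "\<bar>x - centre j\<bar> < pi" using alpha_bounds unfolding arc_interval_iff by linarith
  hence "isCont (\<lambda>x. K1_angle (x - centre j)) x"
    by (intro continuous_intros isCont_o2[OF _ isCont_K1_angle]) auto
  thus "isCont (K_lift j) x" unfolding K_lift_def[abs_def] by (rule isCont_add[OF continuous_const])
qed

lemma K_lift_image:
  assumes "a \<le> b" "{a..b} \<subseteq> arc_interval j"
  shows "K_lift j ` {a..b} = {K_lift j b .. K_lift j a}"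
proof
  show "K_lift j ` {a..b} \<subseteq> {K_lift j b .. K_lift j a}"
  proof (rule image_subsetI)
    fix x assume "x \<in> {a..b}"
    moreover have "a \<in> arc_interval j" "b \<in> arc_interval j" using assms by auto
    ultimately show "K_lift j x \<in> {K_lift j b .. K_lift j a}"
      using assms(2) monotone_onD[OF antimono_on_K_lift] by (simp add: subset_iff)
  qed
  have "connected (K_lift j ` {a..b})"
    by (rule connected_continuous_image[OF continuous_on_subset[OF continuous_on_K_lift assms(2)]]) simp
  thus "{K_lift j b .. K_lift j a} \<subseteq> K_lift j ` {a..b}"
    using assms(1) by (intro connected_contains_Icc) auto
qed

lemma K_lift_growth_core:
  assumes "{a..b} \<subseteq> arc_interval j"
    and "max a (centre j - \<beta>) \<le> min b (centre j + \<beta>)"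
  shows "(b - a) + (\<mu> - 1) * (min b (centre j + \<beta>) - max a (centre j - \<beta>))
    \<le> K_lift j a - K_lift j b"
proof -
  define a' b' where "a' = max a (centre j - \<beta>)" and "b' = min b (centre j + \<beta>)"
  have "a \<le> a'" "a' \<le> b'" "b' \<le> b" using assms(2) unfolding a'_def b'_def by auto
  hence "{a, a', b', b} \<subseteq> arc_interval j" using assms(1) by auto
  hence "a' - a \<le> K_lift j a - K_lift j a'" "b - b' \<le> K_lift j b' - K_lift j b"
    using \<open>a \<le> a'\<close> \<open>b' \<le> b\<close> by (auto intro!: K_lift_noncontracting)
  moreover have "\<mu> * (b' - a') \<le> K_lift j a' - K_lift j b'"
    using \<open>a' \<le> b'\<close> unfolding a'_def b'_def by (intro K_lift_expanding) auto
  ultimately show ?thesis unfolding a'_def [symmetric] b'_def [symmetric] by (simp add: algebra_simps)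
qed

definition arc_label :: "int \<Rightarrow> nat" where
  "arc_label j = (if j mod 3 = 0 then 1 else if j mod 3 = 1 then 3 else 2)"

text \<open>The arc \<open>A\<^sub>a\<close> with \<open>a = arc_label j\<close> is centred at angle \<open>centre j\<close>; the symbol
  \<open>arc_symbol j\<close> resolves both of its overlaps in favour of \<open>K\<^sub>a\<close>.\<close>
definition arc_symbol :: "int \<Rightarrow> nat \<times> nat \<times> nat" where
  "arc_symbol j = (if j mod 3 = 0 then (1, 2, 1) else if j mod 3 = 1 then (1, 3, 3) else (2, 2, 3))"

lemma valid_seq_arc_symbol: "valid_seq (\<lambda>i. arc_symbol (js i))"
  unfolding valid_seq_def arc_symbol_def by auto

lemma rotA_arc_label: "rotA (arc_label j) = cis (centre j)"
proof -
  have "centre j = 2 * pi * (j mod 3) / 3 + 2 * pi * of_int (j div 3)"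
    using centre_add_3[of "j mod 3" "j div 3"] by (simp add: centre_def)
  hence "cis (centre j) = cis (2 * pi * (j mod 3) / 3)"
    by (simp add: cis_add_2pi_int)
  moreover have "cis (4 * pi / 3) = cis (- 2 * pi / 3)"
    using cis_add_2pi_int[of "- 2 * pi / 3" 1] by simp
  moreover have "j mod 3 = 0 \<or> j mod 3 = 1 \<or> j mod 3 = 2" by auto
  ultimately show ?thesis unfolding rotA_def arc_label_def by auto
qed

lemma arcA_iff_Re:
  assumes "a \<in> {1, 2, 3}"
  shows "z \<in> arcA v a \<longleftrightarrow> cmod z = 1 \<and> v \<le> Re (z / rotA a)"
proof -
  have "cis (- 2 * pi / 3) = Complex (- 1 / 2) (- sqrt 3 / 2)" "cis (2 * pi / 3) = Complex (- 1 / 2) (sqrt 3 / 2)"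
    by (simp_all add: complex_eq_iff cos_120 sin_120 cos_120' sin_120')
  moreover have "Re (z / Complex (- 1 / 2) (- sqrt 3 / 2)) = - (Re z + sqrt 3 * Im z) / 2"
    "Re (z / Complex (- 1 / 2) (sqrt 3 / 2)) = - (Re z - sqrt 3 * Im z) / 2"
    by (simp_all add: Re_divide power2_eq_square field_simps)
  ultimately show ?thesis using assms unfolding arcA_def kasner_circle_def rotA_def by auto
qed

lemma cis_in_arcA: "x \<in> arc_interval j \<Longrightarrow> cis x \<in> arcA v (arc_label j)"
proof -
  assume "x \<in> arc_interval j"
  hence "cos \<alpha> \<le> cos \<bar>x - centre j\<bar>"
    using alpha_bounds unfolding arc_interval_iff by (intro cos_monotone_0_pi_le) auto
  moreover have "Re (cis x / rotA (arc_label j)) = cos \<bar>x - centre j\<bar>"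
    by (simp add: rotA_arc_label cis_divide)
  moreover have "cos \<alpha> = v" unfolding \<alpha>_def using v_pos v_less_half by simp
  moreover have "arc_label j \<in> {1, 2, 3}" unfolding arc_label_def by auto
  ultimately show ?thesis by (simp add: arcA_iff_Re)
qed

lemma Kalpha_cis: "x \<in> arc_interval j \<Longrightarrow> Kalpha v (arc_label j) (cis x) = cis (K_lift j x)"
proof -
  assume "x \<in> arc_interval j"
  hence "Arg (cis (x - centre j)) = x - centre j"
    using alpha_bounds unfolding arc_interval_iff by (intro cis_Arg_unique) auto
  thus ?thesis
    unfolding Kalpha_def K1_def rotA_arc_label K_lift_def K1_angle_def \<kappa>_def
    by (simp add: cis_divide cis_mult)
qed

lemma Ksym_arc_symbol:
  assumes "z \<in> arcA v (arc_label j)"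
  shows "Ksym v (arc_symbol j) z = Kalpha v (arc_label j) z"
proof -
  have not_in_all: "\<not> (z \<in> arcA v 1 \<and> z \<in> arcA v 2 \<and> z \<in> arcA v 3)"
    unfolding arcA_def using v_pos by auto
  consider "j mod 3 = 0" | "j mod 3 = 1" | "j mod 3 = 2" by linarith
  thus ?thesis
  proof cases
    case 1
    hence "arc_label j = 1" "arc_symbol j = (1, 2, 1)" by (simp_all add: arc_label_def arc_symbol_def)
    thus ?thesis using assms not_in_all unfolding Ksym_def by auto
  next
    case 2
    hence "arc_label j = 3" "arc_symbol j = (1, 3, 3)" by (simp_all add: arc_label_def arc_symbol_def)
    thus ?thesis using assms not_in_all unfolding Ksym_def by auto
  next
    case 3
    hence "arc_label j = 2" "arc_symbol j = (2, 2, 3)" by (simp_all add: arc_label_def arc_symbol_def)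
    thus ?thesis using assms not_in_all unfolding Ksym_def by auto
  qed
qed

lemma Ksym_arc_symbol_cis:
  "x \<in> arc_interval j \<Longrightarrow> Ksym v (arc_symbol j) (cis x) = cis (K_lift j x)"
  using Ksym_arc_symbol[OF cis_in_arcA] Kalpha_cis by simp

section \<open>Growth of intervals\<close>

lemma nearest_centre: obtains j where "centre j - pi / 3 \<le> x" "x \<le> centre j + pi / 3"
proof -
  define j where "j = \<lfloor>3 * x / (2 * pi) + 1 / 2\<rfloor>"
  have "of_int j \<le> 3 * x / (2 * pi) + 1 / 2" "3 * x / (2 * pi) + 1 / 2 < of_int j + 1"
    unfolding j_def by linarith+
  hence "2 * pi * of_int j \<le> 3 * x + pi" "3 * x + pi < 2 * pi * of_int j + 2 * pi"
    by (simp_all add: field_simps)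
  thus ?thesis using that unfolding centre_def by (simp add: field_simps)
qed

lemma centre_below: obtains j where "centre j \<le> x" "x < centre (j + 1)"
proof -
  define j where "j = \<lfloor>3 * x / (2 * pi)\<rfloor>"
  have "of_int j \<le> 3 * x / (2 * pi)" "3 * x / (2 * pi) < of_int j + 1"
    unfolding j_def by linarith+
  hence "2 * pi * of_int j \<le> 3 * x" "3 * x < 2 * pi * of_int j + 2 * pi"
    by (simp_all add: field_simps)
  thus ?thesis using that unfolding centre_def by (simp add: field_simps)
qed

lemma overlap_interval_subset_iff:
  "overlap_interval j \<subseteq> {a..b} \<longleftrightarrow> a \<le> centre (j + 1) - \<alpha> \<and> centre j + \<alpha> \<le> b"
  using overlap_interval_length[of j] epsilon_bounds unfolding overlap_interval_def by auto

lemma interval_growth_step: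
  assumes "a < b"
  shows "(\<exists>j. overlap_interval j \<subseteq> {a..b}) \<or>
    (\<exists>j. {a..b} \<subseteq> arc_interval j \<and> (b - a) + (\<mu> - 1) * min (b - a) (\<epsilon> / 2) \<le> K_lift j a - K_lift j b)"
proof (cases "b - a \<le> \<epsilon>")
  case True
  obtain j where j: "centre j - pi / 3 \<le> (a + b) / 2" "(a + b) / 2 \<le> centre j + pi / 3"
    by (rule nearest_centre)
  have core: "centre j - \<beta> \<le> a" "b \<le> centre j + \<beta>"
    using j True \<beta>_def by (auto simp: field_simps)
  hence "{a..b} \<subseteq> arc_interval j" using beta_bounds unfolding arc_interval_def by auto
  moreover have "\<mu> * (b - a) \<le> K_lift j a - K_lift j b"
    using core assms by (intro K_lift_expanding) auto
  moreover have "(\<mu> - 1) * min (b - a) (\<epsilon> / 2) \<le> (\<mu> - 1) * (b - a)"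
    using mu_gt_1 by (intro mult_left_mono) auto
  ultimately show ?thesis by (auto simp: algebra_simps)
next
  case False
  obtain j where j: "centre j \<le> a + \<alpha>" "a + \<alpha> < centre (j + 1)" by (rule centre_below)
  show ?thesis
  proof (cases "b \<le> centre j + \<alpha>")
    case True
    have arc: "{a..b} \<subseteq> arc_interval j" using j True unfolding arc_interval_def by auto
    have core_part: "\<epsilon> / 2 \<le> min b (centre j + \<beta>) - max a (centre j - \<beta>)"
      using False j epsilon_bounds \<beta>_def \<epsilon>_def centre_succ[of j]
      unfolding min_def max_def by (split if_split)+ linarith
    have "(b - a) + (\<mu> - 1) * (min b (centre j + \<beta>) - max a (centre j - \<beta>)) \<le> K_lift j a - K_lift j b"
      using core_part epsilon_bounds by (intro K_lift_growth_core[OF arc]) linarith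
    moreover have "(\<mu> - 1) * min (b - a) (\<epsilon> / 2) \<le> (\<mu> - 1) * (min b (centre j + \<beta>) - max a (centre j - \<beta>))"
      using mu_gt_1 core_part min.cobounded2[of "b - a" "\<epsilon> / 2"] by (intro mult_left_mono) linarith+
    ultimately show ?thesis using arc by auto
  next
    case False
    hence "overlap_interval j \<subseteq> {a..b}" using j by (simp add: overlap_interval_subset_iff)
    thus ?thesis by blast
  qed
qed

lemma interval_reaches_overlap:
  fixes Q :: "real \<Rightarrow> real \<Rightarrow> bool"
  assumes step: "\<And>a b j. Q a b \<Longrightarrow> a < b \<Longrightarrow> {a..b} \<subseteq> arc_interval j \<Longrightarrow> Q (K_lift j b) (K_lift j a)"
    and "Q s t" "s < t"
  shows "\<exists>a b j. Q a b \<and> overlap_interval j \<subseteq> {a..b}"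
proof (rule ccontr)
  assume no_overlap: "\<not> ?thesis"
  have in_arc: "\<exists>j. {a..b} \<subseteq> arc_interval j \<and>
      (b - a) + (\<mu> - 1) * min (b - a) (\<epsilon> / 2) \<le> K_lift j a - K_lift j b"
    if "Q a b" "a < b" for a b
    using interval_growth_step[OF that(2)] that(1) no_overlap by blast
  \<comment> \<open>each step lengthens the interval by at least \<open>d\<close>, impossible forever inside arcs of length \<open>2 \<alpha>\<close>\<close>
  define d where "d = (\<mu> - 1) * min (t - s) (\<epsilon> / 2)"
  have "0 < d" unfolding d_def using mu_gt_1 epsilon_bounds \<open>s < t\<close> by auto
  have grow: "\<exists>a' b'. Q a' b' \<and> a' < b' \<and> (b - a) + d \<le> b' - a'"
    if ab: "Q a b" "a < b" "t - s \<le> b - a" for a b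
  proof -
    obtain j where arc: "{a..b} \<subseteq> arc_interval j"
      and expand: "(b - a) + (\<mu> - 1) * min (b - a) (\<epsilon> / 2) \<le> K_lift j a - K_lift j b"
      using in_arc[OF ab(1,2)] by blast
    have "d \<le> (\<mu> - 1) * min (b - a) (\<epsilon> / 2)"
      unfolding d_def using mu_gt_1 \<open>t - s \<le> b - a\<close> by (intro mult_left_mono min.mono) auto
    thus ?thesis using step[OF ab(1,2) arc] expand \<open>0 < d\<close> \<open>a < b\<close>
      by (intro exI[of _ "K_lift j b"] exI[of _ "K_lift j a"]) auto
  qed
  have long: "\<exists>a b. Q a b \<and> a < b \<and> (t - s) + real k * d \<le> b - a" for k
  proof (induction k)
    case 0
    show ?case using assms(2,3) by auto
  next
    case (Suc k)
    then obtain a b where "Q a b" "a < b" "(t - s) + real k * d \<le> b - a" by blast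
    moreover have "0 \<le> real k * d" using \<open>0 < d\<close> by simp
    ultimately show ?case using grow[of a b] by (force simp: algebra_simps)
  qed
  obtain k where "2 * \<alpha> < real k * d" using reals_Archimedean3[OF \<open>0 < d\<close>] by blast
  then obtain a b where "Q a b" "a < b" "2 * \<alpha> < b - a"
    using long[of k] \<open>s < t\<close> by fastforce
  with in_arc[of a b] show False unfolding arc_interval_def by fastforce
qed

lemma invariant_image_interval:
  assumes "\<And>j. K_lift j ` (arc_interval j \<inter> S) \<subseteq> S"
    and "a \<le> b" "{a..b} \<subseteq> arc_interval j" "{a..b} \<subseteq> S"
  shows "{K_lift j b .. K_lift j a} \<subseteq> S"
  using assms(1)[of j] assms(4) K_lift_image[OF assms(2,3)] assms(3) by blast

lemma invariant_reflect_right: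
  assumes inv: "\<And>j. K_lift j ` (arc_interval j \<inter> S) \<subseteq> S"
    and "0 \<le> z" "z \<le> 2 * \<alpha>" "{centre j + \<alpha> - z .. centre j + \<alpha>} \<subseteq> S"
  shows "{centre j + \<alpha> .. centre j + \<alpha> + z} \<subseteq> S"
proof -
  let ?f = "centre j + \<alpha>"
  have "{?f - z .. ?f} \<subseteq> arc_interval j" using assms(2,3) unfolding arc_interval_def by auto
  hence "{K_lift j ?f .. K_lift j (?f - z)} \<subseteq> S"
    using assms(2,4) by (intro invariant_image_interval[OF inv]) auto
  moreover have "z \<le> K_lift j (?f - z) - K_lift j ?f"
    using assms(2,3) K_lift_noncontracting[of "?f - z" j ?f] unfolding arc_interval_def by auto
  ultimately show ?thesis using K_lift_arc_ends(1)[of j] by auto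
qed

lemma invariant_reflect_left:
  assumes periodic: "\<And>x. x + 2 * pi \<in> S \<longleftrightarrow> x \<in> S"
    and inv: "\<And>j. K_lift j ` (arc_interval j \<inter> S) \<subseteq> S"
    and "0 \<le> z" "z \<le> 2 * \<alpha>" "{centre j - \<alpha> .. centre j - \<alpha> + z} \<subseteq> S"
  shows "{centre j - \<alpha> - z .. centre j - \<alpha>} \<subseteq> S"
proof
  let ?e = "centre j - \<alpha>"
  have "{?e .. ?e + z} \<subseteq> arc_interval j" using assms(3,4) unfolding arc_interval_def by auto
  hence "{K_lift j (?e + z) .. K_lift j ?e} \<subseteq> S"
    using assms(3,5) by (intro invariant_image_interval[OF inv]) auto
  moreover have "z \<le> K_lift j ?e - K_lift j (?e + z)"
    using assms(3,4) K_lift_noncontracting[of ?e j "?e + z"] unfolding arc_interval_def by auto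
  ultimately have shifted: "{?e + 2 * pi - z .. ?e + 2 * pi} \<subseteq> S"
    using K_lift_arc_ends(2)[of j] by auto
  fix x assume "x \<in> {?e - z .. ?e}"
  hence "x + 2 * pi \<in> S" using shifted by auto
  thus "x \<in> S" using periodic by simp
qed

lemma overlap_spreads_step:
  assumes periodic: "\<And>x. x + 2 * pi \<in> S \<longleftrightarrow> x \<in> S"
    and inv: "\<And>j. K_lift j ` (arc_interval j \<inter> S) \<subseteq> S"
    and z: "2 * \<epsilon> \<le> z" "z \<le> 2 * \<alpha>" and S: "{centre j + \<alpha> - z .. centre j + \<alpha>} \<subseteq> S"
  shows "{centre j + \<alpha> - min (2 * \<alpha>) (z + 2 * \<epsilon>) .. centre j + \<alpha>} \<subseteq> S"
proof -
  define e f y where "e = centre (j + 1) - \<alpha>" and "f = centre j + \<alpha>"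
    and "y = min (2 * \<alpha>) (z + 2 * \<epsilon>)"
  have "e = f - 2 * \<epsilon>" using overlap_interval_length[of j] unfolding e_def f_def by simp
  have "{f - z .. f + z} \<subseteq> S"
    using invariant_reflect_right[OF inv _ z(2)] S z(1) epsilon_bounds unfolding f_def by fastforce
  moreover have "{e .. e + y} \<subseteq> {f - z .. f + z}"
    using z \<open>e = f - 2 * \<epsilon>\<close> unfolding y_def by (auto simp: min_def)
  ultimately have "{e .. e + y} \<subseteq> S" by blast
  hence "{e - y .. e} \<subseteq> S"
    using invariant_reflect_left[OF periodic inv, of y "j + 1"] z epsilon_bounds
    unfolding e_def y_def by auto
  moreover have "{centre j + \<alpha> - y .. centre j + \<alpha>} \<subseteq> {e - y .. e} \<union> {f - z .. f}"
    using z \<open>e = f - 2 * \<epsilon>\<close> epsilon_bounds unfolding f_def by auto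
  ultimately show ?thesis using S unfolding y_def f_def by blast
qed

lemma overlap_spreads:
  assumes periodic: "\<And>x. x + 2 * pi \<in> S \<longleftrightarrow> x \<in> S"
    and inv: "\<And>j. K_lift j ` (arc_interval j \<inter> S) \<subseteq> S"
    and "overlap_interval j \<subseteq> S"
  shows "S = UNIV"
proof -
  define f where "f = centre j + \<alpha>"
  have arc_part: "{f - min (2 * \<alpha>) (2 * \<epsilon> * real (Suc n)) .. f} \<subseteq> S" for n
  proof (induction n)
    case 0
    have "{f - min (2 * \<alpha>) (2 * \<epsilon> * real (Suc 0)) .. f} = overlap_interval j"
      using overlap_interval_length[of j] epsilon_bounds unfolding overlap_interval_def f_def
      by (simp add: min_def algebra_simps)
    thus ?case using \<open>overlap_interval j \<subseteq> S\<close> by simp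
  next
    case (Suc n)
    have "min (2 * \<alpha>) (min (2 * \<alpha>) (2 * \<epsilon> * real (Suc n)) + 2 * \<epsilon>)
        = min (2 * \<alpha>) (2 * \<epsilon> * real (Suc (Suc n)))"
      using epsilon_bounds by (simp add: min_def algebra_simps)
    thus ?case using overlap_spreads_step[OF periodic inv _ _ Suc.IH[unfolded f_def]] epsilon_bounds
      unfolding f_def by (simp add: mult_le_cancel_left1 min_def split: if_splits)
  qed
  obtain n where "\<alpha> < real n * \<epsilon>" using reals_Archimedean3[OF epsilon_bounds(1)] by blast
  hence "2 * \<alpha> \<le> 2 * \<epsilon> * real (Suc n)" using epsilon_bounds by (simp add: algebra_simps)
  hence "arc_interval j \<subseteq> S"
    using arc_part[of n] unfolding arc_interval_def f_def by (simp add: min_def)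
  hence "{K_lift j (centre j + \<alpha>) .. K_lift j (centre j - \<alpha>)} \<subseteq> S"
    using alpha_bounds by (intro invariant_image_interval[OF inv]) (auto simp: arc_interval_def)
  hence "{centre j - \<alpha> .. centre j - \<alpha> + 2 * pi} \<subseteq> S"
    using \<open>arc_interval j \<subseteq> S\<close> unfolding K_lift_arc_ends arc_interval_def by fastforce
  thus ?thesis using periodic by (intro periodic_set_eq_UNIV) auto
qed

lemma invariant_set_eq_UNIV:
  assumes periodic: "\<And>x. x + 2 * pi \<in> S \<longleftrightarrow> x \<in> S"
    and inv: "\<And>j x. centre j - \<alpha> < x \<Longrightarrow> x < centre j + \<alpha> \<Longrightarrow> x \<in> S \<Longrightarrow> K_lift j x \<in> S"
    and "s < t" "{s..t} \<subseteq> S"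
  shows "S = UNIV"
proof -
  have inv_arc: "K_lift j ` (arc_interval j \<inter> S) \<subseteq> S" for j
  proof
    fix y assume "y \<in> K_lift j ` (arc_interval j \<inter> S)"
    then obtain x where x: "x \<in> arc_interval j" "x \<in> S" "y = K_lift j x" by blast
    consider "x = centre j + \<alpha>" | "x = centre j - \<alpha>" | "centre j - \<alpha> < x" "x < centre j + \<alpha>"
      using x(1) unfolding arc_interval_def by fastforce
    thus "y \<in> S"
      by cases (use x K_lift_arc_ends[of j] periodic inv in auto)
  qed
  have "\<exists>a b j. (a < b \<and> {a..b} \<subseteq> S) \<and> overlap_interval j \<subseteq> {a..b}"
  proof (rule interval_reaches_overlap)
    fix a b j assume "a < b \<and> {a..b} \<subseteq> S" "a < b" "{a..b} \<subseteq> arc_interval j"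
    moreover from this have "b - a \<le> K_lift j a - K_lift j b"
      by (intro K_lift_noncontracting) auto
    ultimately show "K_lift j b < K_lift j a \<and> {K_lift j b .. K_lift j a} \<subseteq> S"
      using invariant_image_interval[OF inv_arc] by auto
  qed (use assms(3,4) in auto)
  thus ?thesis using overlap_spreads[OF periodic inv_arc] by blast
qed

section \<open>Branches of the iterates\<close>

definition branch :: "nat \<Rightarrow> real set \<Rightarrow> (real \<Rightarrow> real) \<Rightarrow> bool" where
  "branch n I F \<longleftrightarrow> continuous_on I F \<and> monotonic_on I F \<and>
     (\<exists>\<omega>. valid_seq \<omega> \<and> (\<forall>x\<in>I. Kiter v \<omega> n (cis x) = cis (F x)))"

lemma branch_subset:
  assumes "branch n I F" "J \<subseteq> I"
  shows "branch n J F"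
proof -
  obtain \<omega> where "valid_seq \<omega>" "\<forall>x\<in>I. Kiter v \<omega> n (cis x) = cis (F x)"
    using assms(1) unfolding branch_def by blast
  thus ?thesis using assms continuous_on_subset[of I F J] monotonic_on_subset[of I F J]
    unfolding branch_def by blast
qed

lemma branch_id: "branch 0 I (\<lambda>x. x)"
  unfolding branch_def monotonic_on_def
  using valid_seq_arc_symbol[of "\<lambda>_. 0"] by (auto intro!: monotone_onI continuous_on_id)

lemma branch_K_lift: "branch 1 (arc_interval j) (K_lift j)"
  unfolding branch_def monotonic_on_def
  using continuous_on_K_lift antimono_on_K_lift valid_seq_arc_symbol[of "\<lambda>_. j"] Ksym_arc_symbol_cis
  by auto

lemma branch_comp:
  assumes "branch n I F" "branch m J G" "F ` I \<subseteq> J"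
  shows "branch (n + m) I (G \<circ> F)"
proof -
  obtain \<omega> where \<omega>: "valid_seq \<omega>" "\<forall>x\<in>I. Kiter v \<omega> n (cis x) = cis (F x)"
    using assms(1) unfolding branch_def by blast
  obtain \<omega>' where \<omega>': "valid_seq \<omega>'" "\<forall>y\<in>J. Kiter v \<omega>' m (cis y) = cis (G y)"
    using assms(2) unfolding branch_def by blast
  have "Kiter v (seq_append \<omega> n \<omega>') (n + m) (cis x) = cis ((G \<circ> F) x)" if "x \<in> I" for x
    using \<omega>(2) \<omega>'(2) assms(3) that by (auto simp: Kiter_seq_append)
  moreover have "continuous_on I (G \<circ> F)"
    unfolding o_def by (rule continuous_on_compose2[of J G I F]) (use assms in \<open>auto simp: branch_def\<close>)
  moreover have "monotonic_on I (G \<circ> F)"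
    using assms unfolding branch_def by (auto intro: monotonic_on_comp)
  ultimately show ?thesis unfolding branch_def using valid_seq_append[OF \<omega>(1) \<omega>'(1)] by blast
qed

lemma branch_shift:
  assumes "branch n I F"
  shows "branch n I (\<lambda>x. F x + 2 * pi * of_int m)"
proof -
  have "monotonic_on I (\<lambda>x. F x + 2 * pi * of_int m)"
    using assms unfolding branch_def monotonic_on_def monotone_on_def by auto
  thus ?thesis using assms unfolding branch_def by (auto intro!: continuous_intros simp: cis_add_2pi_int)
qed

lemma overlap_interval_add_3:
  "y + 2 * pi * of_int m \<in> overlap_interval (k + 3 * m) \<longleftrightarrow> y \<in> overlap_interval k"
  using centre_add_3[of k m] centre_add_3[of "k + 1" m]
  unfolding overlap_interval_def by (auto simp: algebra_simps)

lemma branch_onto_overlap: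
  assumes "0 < e"
  obtains r n k F where "0 < r" "r \<le> e" "1 \<le> n" "k \<in> {0, 1, 2}" "branch n {x - r .. x + r} F"
    "overlap_interval k \<subseteq> F ` {x - r .. x + r}"
proof -
  define r where "r = min e \<epsilon>"
  have r: "0 < r" "r \<le> e" "r \<le> \<epsilon>" using assms epsilon_bounds unfolding r_def by auto
  define I where "I = {x - r .. x + r}"
  obtain j\<^sub>0 where "centre j\<^sub>0 - pi / 3 \<le> x" "x \<le> centre j\<^sub>0 + pi / 3" by (rule nearest_centre)
  hence I_arc: "I \<subseteq> arc_interval j\<^sub>0" using r unfolding I_def arc_interval_def \<epsilon>_def by auto
  define Q where "Q a b \<longleftrightarrow> (\<exists>n F. 1 \<le> n \<and> branch n I F \<and> F ` I = {a..b})" for a b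
  have "\<exists>a b J. Q a b \<and> overlap_interval J \<subseteq> {a..b}"
  proof (rule interval_reaches_overlap)
    fix a b j assume "Q a b" "a < b" and ab_arc: "{a..b} \<subseteq> arc_interval j"
    then obtain n F where F: "1 \<le> n" "branch n I F" "F ` I = {a..b}" unfolding Q_def by blast
    have "branch (n + 1) I (K_lift j \<circ> F)"
      using F ab_arc by (intro branch_comp[OF _ branch_K_lift]) auto
    moreover have "(K_lift j \<circ> F) ` I = K_lift j ` {a..b}"
      using F(3) by (metis image_comp)
    ultimately show "Q (K_lift j b) (K_lift j a)"
      using K_lift_image[OF _ ab_arc] \<open>a < b\<close> F(1) unfolding Q_def
      by (intro exI[of _ "n + 1"] exI[of _ "K_lift j \<circ> F"]) auto
  next
    have "x - r \<le> x + r" using r by simp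
    thus "Q (K_lift j\<^sub>0 (x + r)) (K_lift j\<^sub>0 (x - r))"
      unfolding Q_def using branch_subset[OF branch_K_lift I_arc] K_lift_image[of "x - r" "x + r" j\<^sub>0]
        I_arc unfolding I_def by (intro exI[of _ 1]) auto
    have "(x + r) - (x - r) \<le> K_lift j\<^sub>0 (x - r) - K_lift j\<^sub>0 (x + r)"
      using I_arc r unfolding I_def by (intro K_lift_noncontracting) auto
    thus "K_lift j\<^sub>0 (x + r) < K_lift j\<^sub>0 (x - r)" using r by simp
  qed
  then obtain a b J n F where F: "1 \<le> n" "branch n I F" "F ` I = {a..b}"
    and J: "overlap_interval J \<subseteq> {a..b}"
    unfolding Q_def by blast
  define k m where "k = J mod 3" and "m = J div 3"
  have "J = k + 3 * m" unfolding k_def m_def by simp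
  have "overlap_interval k \<subseteq> (\<lambda>y. F y + 2 * pi * of_int (- m)) ` I"
  proof
    fix y assume "y \<in> overlap_interval k"
    hence "y + 2 * pi * of_int m \<in> F ` I"
      using J F(3) overlap_interval_add_3[of y m k] \<open>J = k + 3 * m\<close> by auto
    thus "y \<in> (\<lambda>y. F y + 2 * pi * of_int (- m)) ` I" by force
  qed
  moreover have "k \<in> {0, 1, 2}" unfolding k_def by auto
  ultimately show ?thesis using that r(1,2) F(1) branch_shift[OF F(2)] unfolding I_def by blast
qed

definition covered_from_overlap :: "int \<Rightarrow> real \<Rightarrow> real \<Rightarrow> bool" where
  "covered_from_overlap k y r \<longleftrightarrow> 0 < r \<and> (\<exists>n a b F. {a..b} \<subseteq> overlap_interval k \<and>
     branch n {a..b} F \<and> {y - r .. y + r} \<subseteq> F ` {a..b})"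

lemma covered_from_overlap_mono:
  assumes "covered_from_overlap k y r" "0 < r'" "r' \<le> r"
  shows "covered_from_overlap k y r'"
proof -
  have "{y - r' .. y + r'} \<subseteq> {y - r .. y + r}" using assms(3) by auto
  thus ?thesis using assms(1,2) unfolding covered_from_overlap_def by (meson order_trans)
qed

lemma covered_from_overlap_shift:
  assumes "covered_from_overlap k y r"
  shows "covered_from_overlap k (y + 2 * pi * of_int m) r"
proof -
  obtain n a b F where "0 < r" "{a..b} \<subseteq> overlap_interval k" "branch n {a..b} F"
    and cover: "{y - r .. y + r} \<subseteq> F ` {a..b}"
    using assms unfolding covered_from_overlap_def by blast
  moreover have "{y + 2 * pi * of_int m - r .. y + 2 * pi * of_int m + r}
      \<subseteq> (\<lambda>x. F x + 2 * pi * of_int m) ` {a..b}"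
  proof
    fix z assume "z \<in> {y + 2 * pi * of_int m - r .. y + 2 * pi * of_int m + r}"
    hence "z - 2 * pi * of_int m \<in> F ` {a..b}" using cover by auto
    thus "z \<in> (\<lambda>x. F x + 2 * pi * of_int m) ` {a..b}" by force
  qed
  ultimately show ?thesis unfolding covered_from_overlap_def using branch_shift by blast
qed

lemma covered_from_overlap_K_lift:
  assumes "centre j - \<alpha> < y" "y < centre j + \<alpha>" "covered_from_overlap k y r"
  shows "\<exists>r'. covered_from_overlap k (K_lift j y) r'"
proof -
  obtain n a b F where "0 < r" and ab: "{a..b} \<subseteq> overlap_interval k"
    and F: "branch n {a..b} F" and cover: "{y - r .. y + r} \<subseteq> F ` {a..b}"
    using assms(3) unfolding covered_from_overlap_def by blast
  define r' where "r' = min r (min (y - (centre j - \<alpha>)) (centre j + \<alpha> - y))"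
  have r': "0 < r'" "r' \<le> r" "{y - r' .. y + r'} \<subseteq> arc_interval j"
    using assms(1,2) \<open>0 < r\<close> unfolding r'_def arc_interval_def by auto
  have "continuous_on {a..b} F" "monotonic_on {a..b} F" using F unfolding branch_def by auto
  moreover have "y - r' \<le> y + r'" "{y - r' .. y + r'} \<subseteq> F ` {a..b}" using cover r'(1,2) by auto
  ultimately obtain lo hi where lo_hi: "a \<le> lo" "hi \<le> b" "F ` {lo..hi} = {y - r' .. y + r'}"
    by (rule continuous_monotonic_interval_preimage)
  have "branch (n + 1) {lo..hi} (K_lift j \<circ> F)"
    using lo_hi r'(3) by (intro branch_comp[OF branch_subset[OF F] branch_K_lift]) auto
  moreover have "(K_lift j \<circ> F) ` {lo..hi} = K_lift j ` {y - r' .. y + r'}"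
    using lo_hi(3) by (metis image_comp)
  moreover have "K_lift j ` {y - r' .. y + r'} = {K_lift j (y + r') .. K_lift j (y - r')}"
    using r' by (intro K_lift_image) auto
  moreover have "r' \<le> K_lift j y - K_lift j (y + r')" "r' \<le> K_lift j (y - r') - K_lift j y"
    using K_lift_noncontracting[of y j "y + r'"] K_lift_noncontracting[of "y - r'" j y] r'
      subsetD[OF r'(3), of "y - r'"] subsetD[OF r'(3), of y] subsetD[OF r'(3), of "y + r'"] by auto
  ultimately have "covered_from_overlap k (K_lift j y) r'"
    unfolding covered_from_overlap_def using r'(1) ab lo_hi(1,2)
    by (intro conjI exI[of _ "n + 1"] exI[of _ lo] exI[of _ hi] exI[of _ "K_lift j \<circ> F"]) auto
  thus ?thesis by blast
qed

lemma covered_from_overlap_everywhere: "\<exists>r. covered_from_overlap k y r"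
proof -
  define S where "S = {y. \<exists>r. covered_from_overlap k y r}"
  define e f where "e = centre (k + 1) - \<alpha>" and "f = centre k + \<alpha>"
  have "f - e = 2 * \<epsilon>" unfolding e_def f_def by (rule overlap_interval_length)
  have "{e + \<epsilon> / 2 .. f - \<epsilon> / 2} \<subseteq> S"
  proof
    fix y assume "y \<in> {e + \<epsilon> / 2 .. f - \<epsilon> / 2}"
    hence "{y - \<epsilon> / 2 .. y + \<epsilon> / 2} \<subseteq> (\<lambda>x. x) ` {e..f}" by auto
    moreover have "{e..f} \<subseteq> overlap_interval k" unfolding overlap_interval_def e_def f_def by simp
    moreover have "0 < \<epsilon> / 2" using epsilon_bounds by simp
    ultimately have "covered_from_overlap k y (\<epsilon> / 2)"
      unfolding covered_from_overlap_def using branch_id[of "{e..f}"] by blast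
    thus "y \<in> S" unfolding S_def by blast
  qed
  moreover have "x + 2 * pi \<in> S \<longleftrightarrow> x \<in> S" for x
    using covered_from_overlap_shift[of k _ _ 1] covered_from_overlap_shift[of k _ _ "- 1"]
    unfolding S_def by fastforce
  moreover have "K_lift j x \<in> S" if "centre j - \<alpha> < x" "x < centre j + \<alpha>" "x \<in> S" for j x
    using that covered_from_overlap_K_lift unfolding S_def by blast
  ultimately have "S = UNIV"
    using \<open>f - e = 2 * \<epsilon>\<close> epsilon_bounds by (intro invariant_set_eq_UNIV) auto
  thus ?thesis unfolding S_def by blast
qed

lemma covered_from_overlaps:
  obtains r where "0 < r" "\<And>k. k \<in> {0, 1, 2} \<Longrightarrow> covered_from_overlap k y r"
proof -
  define R where "R k = (SOME r. covered_from_overlap k y r)" for k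
  have R: "covered_from_overlap k y (R k)" for k
    unfolding R_def by (rule someI_ex[OF covered_from_overlap_everywhere])
  hence "0 < R k" for k unfolding covered_from_overlap_def by blast
  hence "0 < min (R 0) (min (R 1) (R 2))" by simp
  moreover have "covered_from_overlap k y (min (R 0) (min (R 1) (R 2)))" if "k \<in> {0, 1, 2}" for k
    using that calculation by (intro covered_from_overlap_mono[OF R[of k]]) auto
  ultimately show ?thesis by (rule that)
qed

lemma branch_cycle_fixed_point:
  assumes F: "branch n {c..d} F" and G: "branch m {a..b} G"
    and "a \<le> b" "{a..b} \<subseteq> F ` {c..d}" "{c..d} \<subseteq> G ` {a..b}"
  obtains \<theta> \<omega> where "\<theta> \<in> {c..d}" "valid_seq \<omega>" "Kiter v \<omega> (n + m) (cis \<theta>) = cis \<theta>"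
proof -
  have "continuous_on {c..d} F" "monotonic_on {c..d} F" using F unfolding branch_def by auto
  then obtain lo hi where lo_hi: "c \<le> lo" "lo \<le> hi" "hi \<le> d" "F ` {lo..hi} = {a..b}"
    using assms(3,4) by (rule continuous_monotonic_interval_preimage)
  have GF: "branch (n + m) {lo..hi} (G \<circ> F)"
    using lo_hi by (intro branch_comp[OF branch_subset[OF F] G]) auto
  have "(G \<circ> F) ` {lo..hi} = G ` {a..b}" using lo_hi(4) by (metis image_comp)
  hence "{lo..hi} \<subseteq> (G \<circ> F) ` {lo..hi}" using assms(5) lo_hi(1,3) by auto
  moreover have "continuous_on {lo..hi} (G \<circ> F)" using GF unfolding branch_def by blast
  ultimately obtain \<theta> where \<theta>: "\<theta> \<in> {lo..hi}" "(G \<circ> F) \<theta> = \<theta>"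
    using interval_covering_fixed_point lo_hi(2) by blast
  obtain \<omega> where "valid_seq \<omega>" "\<forall>y\<in>{lo..hi}. Kiter v \<omega> (n + m) (cis y) = cis ((G \<circ> F) y)"
    using GF unfolding branch_def by blast
  moreover have "\<theta> \<in> {c..d}" using \<theta>(1) lo_hi(1,3) by auto
  ultimately show ?thesis using that \<theta> by simp
qed

section \<open>Chaos\<close>

lemma sensitive_kasner: "sensitive v"
  unfolding sensitive_def
proof (intro exI[of _ "sin (\<epsilon> / 2)"] conjI ballI allI impI)
  show "0 < sin (\<epsilon> / 2)" using epsilon_bounds by (intro sin_gt_zero) auto
  fix p U assume "p \<in> kasner_circle" "openin (top_of_set kasner_circle) U \<and> p \<in> U"
  then obtain x e where p: "p = cis x" and "0 < e" and U: "\<And>y. \<bar>y - x\<bar> \<le> e \<Longrightarrow> cis y \<in> U"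
    using kasner_circle_openin_arc by meson
  obtain r n k F where "0 < r" "r \<le> e" "1 \<le> n" "k \<in> {0, 1, 2}" and F: "branch n {x - r .. x + r} F"
    and k: "overlap_interval k \<subseteq> F ` {x - r .. x + r}"
    using \<open>0 < e\<close> by (rule branch_onto_overlap)
  obtain \<omega> where \<omega>: "valid_seq \<omega>" "\<And>y. y \<in> {x - r .. x + r} \<Longrightarrow> Kiter v \<omega> n (cis y) = cis (F y)"
    using F unfolding branch_def by blast
  have "centre (k + 1) - \<alpha> \<in> F ` {x - r .. x + r}" "centre (k + 1) - \<alpha> + \<epsilon> \<in> F ` {x - r .. x + r}"
    using k overlap_interval_length[of k] epsilon_bounds unfolding overlap_interval_def by auto
  moreover have x: "x \<in> {x - r .. x + r}" using \<open>0 < r\<close> by auto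
  ultimately obtain q where q: "q \<in> {x - r .. x + r}"
    and "\<bar>sin (\<epsilon> / 2)\<bar> \<le> dist (cis (F x)) (cis (F q))"
    by (rule far_point_in_image)
  hence far: "sin (\<epsilon> / 2) \<le> dist (Kiter v \<omega> n p) (Kiter v \<omega> n (cis q))"
    using \<open>0 < sin (\<epsilon> / 2)\<close> \<omega>(2)[OF x] \<omega>(2)[OF q] p by simp
  moreover have "cis q \<noteq> p"
  proof
    assume "cis q = p"
    hence "dist (Kiter v \<omega> n p) (Kiter v \<omega> n (cis q)) = 0" by simp
    thus False using far \<open>0 < sin (\<epsilon> / 2)\<close> by linarith
  qed
  moreover have "cis q \<in> U" using q \<open>r \<le> e\<close> by (intro U) auto
  ultimately show "\<exists>q\<in>U - {p}. \<exists>n \<omega> \<omega>'. valid_seq \<omega> \<and> valid_seq \<omega>' \<and>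
      sin (\<epsilon> / 2) \<le> dist (Kiter v \<omega> n p) (Kiter v \<omega>' n q)"
    using \<omega>(1) by blast
qed

lemma top_transitive_kasner: "top_transitive v"
  unfolding top_transitive_def
proof (intro allI impI)
  fix U V
  assume UV: "openin (top_of_set kasner_circle) U \<and> U \<noteq> {} \<and> openin (top_of_set kasner_circle) V \<and> V \<noteq> {}"
  then obtain p q where "p \<in> U" "q \<in> V" by blast
  obtain x e where "0 < e" and U: "\<And>z. \<bar>z - x\<bar> \<le> e \<Longrightarrow> cis z \<in> U"
    using UV \<open>p \<in> U\<close> kasner_circle_openin_arc by meson
  obtain y where q: "q = cis y"
    using UV \<open>q \<in> V\<close> kasner_circle_openin_arc by meson
  obtain r n k F where "0 < r" "r \<le> e" "1 \<le> n" "k \<in> {0, 1, 2}" and F: "branch n {x - r .. x + r} F"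
    and k: "overlap_interval k \<subseteq> F ` {x - r .. x + r}"
    using \<open>0 < e\<close> by (rule branch_onto_overlap)
  obtain \<rho> m a b G where "0 < \<rho>" and ab: "{a..b} \<subseteq> overlap_interval k" and G: "branch m {a..b} G"
    and cover: "{y - \<rho> .. y + \<rho>} \<subseteq> G ` {a..b}"
    using covered_from_overlap_everywhere[of k y] unfolding covered_from_overlap_def by blast
  have "y \<in> G ` {a..b}" using cover \<open>0 < \<rho>\<close> by auto
  then obtain c where c: "c \<in> {a..b}" "G c = y" by blast
  have "c \<in> F ` {x - r .. x + r}" using k ab c(1) by blast
  then obtain z where z: "z \<in> {x - r .. x + r}" "F z = c" by blast
  have "branch (n + m) {z} (G \<circ> F)"
    using z c by (intro branch_comp[OF branch_subset[OF F] G]) auto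
  then obtain \<omega> where "valid_seq \<omega>" "\<forall>z'\<in>{z}. Kiter v \<omega> (n + m) (cis z') = cis ((G \<circ> F) z')"
    unfolding branch_def by blast
  moreover have "cis z \<in> U" using z \<open>r \<le> e\<close> by (intro U) auto
  ultimately have "valid_seq \<omega> \<and> q \<in> Kiter v \<omega> (n + m) ` U \<inter> V"
    using c z q \<open>q \<in> V\<close> by force
  thus "\<exists>n\<ge>1. \<exists>\<omega>. valid_seq \<omega> \<and> Kiter v \<omega> n ` U \<inter> V \<noteq> {}"
    using \<open>1 \<le> n\<close> by (intro exI[of _ "n + m"]) auto
qed

lemma dense_periodic_kasner: "dense_periodic v"
  unfolding dense_periodic_def
proof (intro ballI allI impI)
  fix p U assume "p \<in> kasner_circle" "openin (top_of_set kasner_circle) U \<and> p \<in> U"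
  then obtain x e where "0 < e" and U: "\<And>y. \<bar>y - x\<bar> \<le> e \<Longrightarrow> cis y \<in> U"
    using kasner_circle_openin_arc by meson
  obtain \<rho> where "0 < \<rho>" and \<rho>: "\<And>k. k \<in> {0, 1, 2} \<Longrightarrow> covered_from_overlap k x \<rho>"
    using covered_from_overlaps[of x] by blast
  have "0 < min e \<rho>" using \<open>0 < e\<close> \<open>0 < \<rho>\<close> by simp
  then obtain r n k F where "0 < r" "r \<le> min e \<rho>" "1 \<le> n" "k \<in> {0, 1, 2}"
    and F: "branch n {x - r .. x + r} F" and k: "overlap_interval k \<subseteq> F ` {x - r .. x + r}"
    by (rule branch_onto_overlap)
  hence "covered_from_overlap k x r" using covered_from_overlap_mono[OF \<rho>] by simp
  then obtain m a b G where ab: "{a..b} \<subseteq> overlap_interval k" and G: "branch m {a..b} G"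
    and cover: "{x - r .. x + r} \<subseteq> G ` {a..b}"
    unfolding covered_from_overlap_def by blast
  have "x \<in> G ` {a..b}" using cover \<open>0 < r\<close> by auto
  hence "a \<le> b" by auto
  moreover have "{a..b} \<subseteq> F ` {x - r .. x + r}" using ab k by blast
  ultimately obtain \<theta> \<omega> where \<theta>: "\<theta> \<in> {x - r .. x + r}" "valid_seq \<omega>"
    "Kiter v \<omega> (n + m) (cis \<theta>) = cis \<theta>"
    by (rule branch_cycle_fixed_point[OF F G _ _ cover])
  moreover have "cis \<theta> \<in> U" using \<theta>(1) \<open>r \<le> min e \<rho>\<close> by (intro U) auto
  ultimately have "valid_seq \<omega> \<and> cis \<theta> \<in> U \<and> n + m \<ge> 1 \<and> Kiter v \<omega> (n + m) (cis \<theta>) = cis \<theta>"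
    using \<open>1 \<le> n\<close> by simp
  thus "\<exists>\<omega> q n. valid_seq \<omega> \<and> q \<in> U \<and> n \<ge> 1 \<and> Kiter v \<omega> n q = q" by blast
qed

end

theorem theorem1:
  fixes v :: real
  assumes "0 < v" and "v < 1/2"
  shows "realizes_chaos v"
proof -
  interpret kasner_parameter v using assms by unfold_locales
  show ?thesis
    unfolding realizes_chaos_def using sensitive_kasner top_transitive_kasner dense_periodic_kasner by blast
qed

end
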